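(* Every Schnorr random set $A\subseteq\omega$ is canonically immune.
   Context: A canonical numbering of the finite sets is a surjective map $e\mapsto D_e$ from $\omega$ onto the finite subsets of $\omega$ such that $\{(e,x): x\in D_e\}$ is recursive and $e\mapsto|D_e|$ is recursive. A set $R\subseteq\omega$ is canonically immune if $R$ is infinite and there is a recursive function $h$ such that for every canonical numbering $(D_e)$ of the finite sets, for all but finitely many $e$, if $D_e\subseteq R$ then $|D_e|\le h(e)$. Schnorr randomness is with respect to the uniform (fair coin) measure on $2^\omega$, identifying sets with their characteristic sequences. *)

theory Defs
  imports "HOL-Probability.Probability"
begin

datatype rf = Z | S | Proj nat | Comp rf "rf list" | Prec rf rf | Mn rf

inductive evalr :: "rf \<Rightarrow> nat list \<Rightarrow> nat \<Rightarrow> bool" where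
  ev_Z: "evalr Z xs 0"
| ev_S: "evalr S (x # xs) (Suc x)"
| ev_Proj: "i < length xs \<Longrightarrow> evalr (Proj i) xs (xs ! i)"
| ev_Comp: "list_all2 (\<lambda>g y. evalr g xs y) gs ys \<Longrightarrow> evalr f ys z \<Longrightarrow> evalr (Comp f gs) xs z"
| ev_Prec0: "evalr g xs y \<Longrightarrow> evalr (Prec g h) (0 # xs) y"
| ev_PrecS: "evalr (Prec g h) (n # xs) r \<Longrightarrow> evalr h (n # r # xs) y
             \<Longrightarrow> evalr (Prec g h) (Suc n # xs) y"
| ev_Mn: "evalr f (y # xs) 0 \<Longrightarrow> (\<forall>z<y. \<exists>v. evalr f (z # xs) v \<and> 0 < v)
          \<Longrightarrow> evalr (Mn f) xs y"

definition total_rec1 :: "(nat \<Rightarrow> nat) \<Rightarrow> bool" where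
  "total_rec1 f \<longleftrightarrow> (\<exists>t. \<forall>x. evalr t [x] (f x))"

definition total_rec2 :: "(nat \<Rightarrow> nat \<Rightarrow> nat) \<Rightarrow> bool" where
  "total_rec2 f \<longleftrightarrow> (\<exists>t. \<forall>x y. evalr t [x, y] (f x y))"

definition rec_rel2 :: "(nat \<Rightarrow> nat \<Rightarrow> bool) \<Rightarrow> bool" where
  "rec_rel2 P \<longleftrightarrow> total_rec2 (\<lambda>x y. if P x y then 1 else 0)"

definition ce_set2 :: "(nat \<times> nat) set \<Rightarrow> bool" where
  "ce_set2 W \<longleftrightarrow> (\<exists>t. \<forall>n m. (n, m) \<in> W \<longleftrightarrow> (\<exists>y. evalr t [n, m] y))"

definition canonical_numbering :: "(nat \<Rightarrow> nat set) \<Rightarrow> bool" where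
  "canonical_numbering D \<longleftrightarrow>
     range D = {F. finite F} \<and> rec_rel2 (\<lambda>e x. x \<in> D e) \<and> total_rec1 (\<lambda>e. card (D e))"

definition canonically_immune :: "nat set \<Rightarrow> bool" where
  "canonically_immune R \<longleftrightarrow> infinite R \<and>
     (\<exists>h. total_rec1 h \<and>
        (\<forall>D. canonical_numbering D \<longrightarrow> finite {e. D e \<subseteq> R \<and> h e < card (D e)}))"

text \<open>Effective coding of finite binary strings by natural numbers (a bijection).\<close>
fun bl_of_nat :: "nat \<Rightarrow> bool list" where
  "bl_of_nat n = (if n = 0 then [] else bl_of_nat ((n - 1) div 2) @ [(n - 1) mod 2 = 1])"

definition cyl :: "bool list \<Rightarrow> (nat \<Rightarrow> bool) set" where
  "cyl \<sigma> = {X. \<forall>i < length \<sigma>. X i = \<sigma> ! i}"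

definition coin :: "(nat \<Rightarrow> bool) measure" where
  "coin = PiM UNIV (\<lambda>_::nat. measure_pmf (bernoulli_pmf (1/2)))"

text \<open>The n-th open set generated by the c.e. set of (level, string-code) pairs W.\<close>
definition test_set :: "(nat \<times> nat) set \<Rightarrow> nat \<Rightarrow> (nat \<Rightarrow> bool) set" where
  "test_set W n = (\<Union>m\<in>{m. (n, m) \<in> W}. cyl (bl_of_nat m))"

text \<open>Schnorr test: uniformly c.e. open sets U_n with measure \<le> 2^-n, and the measures
  uniformly computable reals (a n k / (b n k + 1) approximates the measure of U_n within 2^-k).\<close>
definition schnorr_test :: "(nat \<times> nat) set \<Rightarrow> (nat \<Rightarrow> nat \<Rightarrow> nat) \<Rightarrow> (nat \<Rightarrow> nat \<Rightarrow> nat) \<Rightarrow> bool" where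
  "schnorr_test W a b \<longleftrightarrow> ce_set2 W \<and> total_rec2 a \<and> total_rec2 b \<and>
     (\<forall>n. measure coin (test_set W n) \<le> (1/2) ^ n) \<and>
     (\<forall>n k. \<bar>measure coin (test_set W n) - real (a n k) / real (b n k + 1)\<bar> \<le> (1/2) ^ k)"

definition schnorr_random :: "nat set \<Rightarrow> bool" where
  "schnorr_random A \<longleftrightarrow>
     (\<forall>W a b. schnorr_test W a b \<longrightarrow> (\<exists>n. (\<lambda>i. i \<in> A) \<notin> test_set W n))"

end

theory Submission
  imports Defs
begin

text \<open>
  Take \<open>h\<close> to be the identity. For a canonical numbering \<open>D\<close>, the event
  ``\<open>D e \<subseteq> X\<close> and \<open>e < card (D e)\<close>'' depends only on a computable finite prefix of \<open>X\<close>
  and has measure at most \<open>2 ^ -(e + 1)\<close>. For any uniformly decidable family of such small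
  prefix events, the tails \<open>\<Union>e\<ge>n\<close> form a Schnorr test: the \<open>n\<close>-th tail differs from the union
  of its first \<open>k\<close> events by a set of measure at most \<open>2 ^ -(n + k)\<close>, and that union has a
  dyadic measure obtained by counting prefixes. So a Schnorr random set lies in only finitely
  many of the events. Applied to the events ``bits \<open>e\<close> to \<open>2e\<close> of \<open>X\<close> are all zero'', the same
  argument shows that a Schnorr random set is infinite.
\<close>

section \<open>Total recursive functions on argument lists\<close>

inductive_cases evalr_ZE: "evalr Z xs y"
inductive_cases evalr_SE: "evalr S xs y"
inductive_cases evalr_ProjE: "evalr (Proj i) xs y"
inductive_cases evalr_CompE: "evalr (Comp f gs) xs y"
inductive_cases evalr_PrecE: "evalr (Prec g h) xs y"
inductive_cases evalr_MnE: "evalr (Mn f) xs y"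

lemma list_all2_unique:
  assumes "list_all2 P gs ys" "list_all2 Q gs ys'" "\<And>g y y'. P g y \<Longrightarrow> Q g y' \<Longrightarrow> y = y'"
  shows "ys = ys'"
  using assms(1,2)
proof (induction arbitrary: ys' rule: list_all2_induct)
  case Nil then show ?case by simp
next
  case (Cons g gs y ys)
  then obtain y' ys'' where "ys' = y' # ys''" "Q g y'" "list_all2 Q gs ys''"
    by (auto simp: list_all2_Cons1)
  then show ?case using Cons assms(3) by auto
qed

lemma evalr_deterministic: "evalr t xs y \<Longrightarrow> evalr t xs y' \<Longrightarrow> y = y'"
proof (induction arbitrary: y' rule: evalr.induct)
  case ev_Z then show ?case by (auto elim: evalr_ZE)
next
  case ev_S then show ?case by (auto elim: evalr_SE)
next
  case ev_Proj then show ?case by (auto elim: evalr_ProjE)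
next
  case (ev_Comp xs gs ys f z)
  from ev_Comp.prems obtain ys' where "list_all2 (\<lambda>g y. evalr g xs y) gs ys'" "evalr f ys' y'"
    by (auto elim: evalr_CompE)
  moreover from this(1) have "ys = ys'"
    by (rule list_all2_unique[OF ev_Comp(1)]) auto
  ultimately show ?case using ev_Comp(2) by simp
next
  case ev_Prec0
  from ev_Prec0.prems show ?case
    by (rule evalr_PrecE) (use ev_Prec0.IH in auto)
next
  case (ev_PrecS g h n xs r y)
  from ev_PrecS.prems obtain r' where "evalr (Prec g h) (n # xs) r'" "evalr h (n # r' # xs) y'"
    by (rule evalr_PrecE) auto
  then show ?case using ev_PrecS.IH by auto
next
  case (ev_Mn f y xs)
  from ev_Mn.prems have y': "evalr f (y' # xs) 0" "\<forall>z<y'. \<exists>v. evalr f (z # xs) v \<and> 0 < v"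
    by (rule evalr_MnE, simp)+
  show ?case
  proof (rule linorder_cases[of y y'])
    assume "y < y'"
    then show ?thesis using y'(2) ev_Mn(2) by fastforce
  next
    assume "y' < y"
    then show ?thesis using ev_Mn(3) y'(1) by fastforce
  qed
qed

lemma evalr_Mn_Least:
  assumes "\<And>y. evalr t (y # xs) (f y)" and "\<exists>y. f y = 0"
  shows "evalr (Mn t) xs (LEAST y. f y = 0)"
proof (rule ev_Mn)
  show "evalr t ((LEAST y. f y = 0) # xs) 0"
    using assms(1) LeastI_ex[OF assms(2)] by metis
  show "\<forall>z<(LEAST y. f y = 0). \<exists>v. evalr t (z # xs) v \<and> 0 < v"
    using assms(1) not_less_Least by blast
qed

definition rec_fn :: "nat \<Rightarrow> (nat list \<Rightarrow> nat) \<Rightarrow> bool" where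
  "rec_fn k f \<longleftrightarrow> (\<exists>t. \<forall>xs. length xs = k \<longrightarrow> evalr t xs (f xs))"

definition rec_pred :: "nat \<Rightarrow> (nat list \<Rightarrow> bool) \<Rightarrow> bool" where
  "rec_pred k P \<longleftrightarrow> rec_fn k (\<lambda>xs. if P xs then 1 else 0)"

lemma rec_fn_cong: "rec_fn k f \<Longrightarrow> (\<And>xs. length xs = k \<Longrightarrow> f xs = g xs) \<Longrightarrow> rec_fn k g"
  unfolding rec_fn_def by metis

lemma rec_fn_proj: "i < k \<Longrightarrow> rec_fn k (\<lambda>xs. xs ! i)"
  unfolding rec_fn_def by (auto intro!: exI[of _ "Proj i"] ev_Proj)

lemma rec_fn_zero: "rec_fn k (\<lambda>xs. 0)"
  unfolding rec_fn_def by (auto intro!: exI[of _ Z] ev_Z)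

lemma length_1_conv_nth: "length xs = 1 \<Longrightarrow> xs = [xs ! 0]"
  by (cases xs) auto

lemma length_2_conv_nth: "length xs = 2 \<Longrightarrow> xs = [xs ! 0, xs ! 1]"
  by (cases xs; cases "tl xs") (auto simp: numeral_2_eq_2)

lemma map_nth_upt_eq: "length xs = k \<Longrightarrow> map (\<lambda>i. xs ! i) [0..<k] = xs"
  using map_nth[of xs] by simp

lemma rec_fn_Suc_proj0: "rec_fn 1 (\<lambda>xs. Suc (xs ! 0))"
  unfolding rec_fn_def
  by (intro exI[of _ S] allI impI) (metis ev_S length_1_conv_nth nth_Cons_0)

lemma rec_fn_comp:
  assumes f: "rec_fn (length gs) f" and gs: "\<forall>g\<in>set gs. rec_fn k g"
  shows "rec_fn k (\<lambda>xs. f (map (\<lambda>g. g xs) gs))"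
proof -
  let ?computes = "\<lambda>g t. \<forall>xs. length xs = k \<longrightarrow> evalr t xs (g xs)"
  obtain tf where tf: "\<forall>ys. length ys = length gs \<longrightarrow> evalr tf ys (f ys)"
    using f by (auto simp: rec_fn_def)
  have "\<exists>ts. list_all2 ?computes gs ts" using gs
  proof (induction gs)
    case (Cons g gs)
    then obtain ts t where "list_all2 ?computes gs ts" "?computes g t"
      by (auto simp: rec_fn_def)
    then show ?case by (intro exI[of _ "t # ts"]) auto
  qed (intro exI[of _ "[]"], simp)
  then obtain ts where ts: "list_all2 ?computes gs ts" ..
  have args: "list_all2 (\<lambda>t y. evalr t xs y) ts (map (\<lambda>g. g xs) gs)" if "length xs = k" for xs
    using ts that by (induction rule: list_all2_induct) auto
  have "evalr (Comp tf ts) xs (f (map (\<lambda>g. g xs) gs))" if "length xs = k" for xs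
    by (rule ev_Comp[OF args[OF that]]) (use tf in auto)
  then show ?thesis
    unfolding rec_fn_def by blast
qed

lemma rec_fn_comp1: "rec_fn 1 f \<Longrightarrow> rec_fn k g \<Longrightarrow> rec_fn k (\<lambda>xs. f [g xs])"
  using rec_fn_comp[of "[g]" f k] by simp

lemma rec_fn_comp2:
  "rec_fn 2 f \<Longrightarrow> rec_fn k g \<Longrightarrow> rec_fn k h \<Longrightarrow> rec_fn k (\<lambda>xs. f [g xs, h xs])"
  using rec_fn_comp[of "[g, h]" f k] by (simp add: numeral_2_eq_2)

lemma rec_fn_cong1: "rec_fn 1 f \<Longrightarrow> (\<And>a. f [a] = g [a]) \<Longrightarrow> rec_fn 1 g"
  by (erule rec_fn_cong) (metis length_1_conv_nth)

lemma rec_fn_cong2: "rec_fn 2 f \<Longrightarrow> (\<And>a b. f [a, b] = g [a, b]) \<Longrightarrow> rec_fn 2 g"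
  by (erule rec_fn_cong) (metis length_2_conv_nth)

fun prim_rec :: "(nat list \<Rightarrow> nat) \<Rightarrow> (nat list \<Rightarrow> nat) \<Rightarrow> nat \<Rightarrow> nat list \<Rightarrow> nat" where
  "prim_rec g h 0 xs = g xs"
| "prim_rec g h (Suc n) xs = h (n # prim_rec g h n xs # xs)"

lemma rec_fn_prim_rec:
  assumes "rec_fn k g" "rec_fn (Suc (Suc k)) h"
  shows "rec_fn (Suc k) (\<lambda>xs. prim_rec g h (hd xs) (tl xs))"
proof -
  obtain tg th where tg: "\<forall>xs. length xs = k \<longrightarrow> evalr tg xs (g xs)"
    and th: "\<forall>xs. length xs = Suc (Suc k) \<longrightarrow> evalr th xs (h xs)"
    using assms by (auto simp: rec_fn_def)
  have "length xs = k \<Longrightarrow> evalr (Prec tg th) (n # xs) (prim_rec g h n xs)" for n xs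
    by (induction n) (auto intro!: ev_Prec0 ev_PrecS tg[rule_format] th[rule_format])
  then show ?thesis
    unfolding rec_fn_def by (intro exI[of _ "Prec tg th"]) (auto simp: length_Suc_conv)
qed

lemma rec_fn_Cons:
  assumes f: "rec_fn (Suc k) f" and g: "rec_fn k g"
  shows "rec_fn k (\<lambda>xs. f (g xs # xs))"
proof -
  have "rec_fn k (\<lambda>xs. f (map (\<lambda>h. h xs) (g # map (\<lambda>i xs. xs ! i) [0..<k])))"
    by (rule rec_fn_comp) (use f g in \<open>auto intro: rec_fn_proj\<close>)
  then show ?thesis
    by (rule rec_fn_cong) (simp add: comp_def map_nth_upt_eq)
qed

lemma rec_fn_tl:
  assumes "rec_fn k f"
  shows "rec_fn (Suc k) (\<lambda>xs. f (tl xs))"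
proof -
  have "rec_fn (Suc k) (\<lambda>xs. f (map (\<lambda>h. h xs) (map (\<lambda>i xs. xs ! Suc i) [0..<k])))"
    by (rule rec_fn_comp) (use assms in \<open>auto intro: rec_fn_proj\<close>)
  then show ?thesis
    by (rule rec_fn_cong) (auto simp: comp_def length_Suc_conv map_nth_upt_eq)
qed

lemma rec_fn_Suc: "rec_fn k f \<Longrightarrow> rec_fn k (\<lambda>xs. Suc (f xs))"
  using rec_fn_comp1[OF rec_fn_Suc_proj0] by simp

lemma rec_fn_const: "rec_fn k (\<lambda>xs. c)"
  by (induction c) (auto intro: rec_fn_zero rec_fn_Suc[of k "\<lambda>_. _", simplified])

lemma rec_fn_add: "rec_fn k f \<Longrightarrow> rec_fn k g \<Longrightarrow> rec_fn k (\<lambda>xs. f xs + g xs)"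
proof -
  have "rec_fn 2 (\<lambda>xs. prim_rec (\<lambda>xs. xs ! 0) (\<lambda>ys. Suc (ys ! 1)) (hd xs) (tl xs))"
    using rec_fn_prim_rec[of 1 "\<lambda>xs. xs ! 0" "\<lambda>ys. Suc (ys ! 1)"]
    by (simp add: numeral_2_eq_2 rec_fn_proj rec_fn_Suc)
  moreover have "prim_rec (\<lambda>xs. xs ! 0) (\<lambda>ys. Suc (ys ! 1)) n [m] = n + m" for n m
    by (induction n) auto
  ultimately have "rec_fn 2 (\<lambda>xs. xs ! 0 + xs ! 1)"
    by (elim rec_fn_cong2) simp
  then show "rec_fn k f \<Longrightarrow> rec_fn k g \<Longrightarrow> rec_fn k (\<lambda>xs. f xs + g xs)"
    using rec_fn_comp2 by fastforce
qed

lemma rec_fn_mult: "rec_fn k f \<Longrightarrow> rec_fn k g \<Longrightarrow> rec_fn k (\<lambda>xs. f xs * g xs)"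
proof -
  have "rec_fn 2 (\<lambda>xs. prim_rec (\<lambda>xs. 0) (\<lambda>ys. ys ! 1 + ys ! 2) (hd xs) (tl xs))"
    using rec_fn_prim_rec[of 1 "\<lambda>xs. 0" "\<lambda>ys. ys ! 1 + ys ! 2"]
    by (simp add: numeral_2_eq_2 rec_fn_proj rec_fn_add rec_fn_zero)
  moreover have "prim_rec (\<lambda>xs. 0) (\<lambda>ys. ys ! 1 + ys ! 2) n [m] = n * m" for n m
    by (induction n) auto
  ultimately have "rec_fn 2 (\<lambda>xs. xs ! 0 * xs ! 1)"
    by (elim rec_fn_cong2) simp
  then show "rec_fn k f \<Longrightarrow> rec_fn k g \<Longrightarrow> rec_fn k (\<lambda>xs. f xs * g xs)"
    using rec_fn_comp2 by fastforce
qed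

lemma rec_fn_diff: "rec_fn k f \<Longrightarrow> rec_fn k g \<Longrightarrow> rec_fn k (\<lambda>xs. f xs - g xs)"
proof -
  have "rec_fn 1 (\<lambda>xs. prim_rec (\<lambda>xs. 0) (\<lambda>ys. ys ! 0) (hd xs) (tl xs))"
    using rec_fn_prim_rec[of 0 "\<lambda>xs. 0" "\<lambda>ys. ys ! 0"] by (simp add: rec_fn_proj rec_fn_zero)
  moreover have "prim_rec (\<lambda>xs. 0) (\<lambda>ys. ys ! 0) n [] = n - 1" for n
    by (induction n) auto
  ultimately have pred: "rec_fn 1 (\<lambda>xs. xs ! 0 - 1)"
    by (elim rec_fn_cong1) simp
  have "rec_fn 3 (\<lambda>ys. ys ! 1 - 1)"
    using rec_fn_comp1[OF pred rec_fn_proj[of 1 3]] by simp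
  then have "rec_fn 2 (\<lambda>xs. prim_rec (\<lambda>xs. xs ! 0) (\<lambda>ys. ys ! 1 - 1) (hd xs) (tl xs))"
    using rec_fn_prim_rec[of 1 "\<lambda>xs. xs ! 0" "\<lambda>ys. ys ! 1 - 1"]
    by (simp add: numeral_2_eq_2 numeral_3_eq_3 rec_fn_proj)
  moreover have "prim_rec (\<lambda>xs. xs ! 0) (\<lambda>ys. ys ! 1 - 1) n [m] = m - n" for n m
    by (induction n) auto
  ultimately have "rec_fn 2 (\<lambda>xs. xs ! 1 - xs ! 0)"
    by (elim rec_fn_cong2) simp
  then show "rec_fn k f \<Longrightarrow> rec_fn k g \<Longrightarrow> rec_fn k (\<lambda>xs. f xs - g xs)"
    using rec_fn_comp2[of _ k g f] by fastforce
qed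

lemma rec_fn_power2: "rec_fn k f \<Longrightarrow> rec_fn k (\<lambda>xs. 2 ^ f xs)"
proof -
  have "rec_fn 1 (\<lambda>xs. prim_rec (\<lambda>xs. 1) (\<lambda>ys. ys ! 1 + ys ! 1) (hd xs) (tl xs))"
    using rec_fn_prim_rec[of 0 "\<lambda>xs. 1" "\<lambda>ys. ys ! 1 + ys ! 1"]
    by (simp add: rec_fn_proj rec_fn_const rec_fn_add)
  moreover have "prim_rec (\<lambda>xs. 1) (\<lambda>ys. ys ! 1 + ys ! 1) n [] = 2 ^ n" for n
    by (induction n) auto
  ultimately have "rec_fn 1 (\<lambda>xs. 2 ^ (xs ! 0))"
    by (elim rec_fn_cong1) simp
  then show "rec_fn k f \<Longrightarrow> rec_fn k (\<lambda>xs. 2 ^ f xs)"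
    using rec_fn_comp1 by fastforce
qed

lemma rec_fn_sum_lessThan:
  assumes f: "rec_fn (Suc k) f" and g: "rec_fn k g"
  shows "rec_fn k (\<lambda>xs. \<Sum>y<g xs. f (y # xs))"
proof -
  have "rec_fn (Suc (Suc k)) (\<lambda>ys. f (map (\<lambda>h. h ys) ((\<lambda>ys. ys ! 0) # map (\<lambda>i ys. ys ! (i + 2)) [0..<k])))"
    by (rule rec_fn_comp) (use f in \<open>auto intro: rec_fn_proj\<close>)
  then have "rec_fn (Suc (Suc k)) (\<lambda>ys. f (ys ! 0 # drop 2 ys))"
    by (rule rec_fn_cong) (auto simp: comp_def length_Suc_conv map_nth_upt_eq)
  then have "rec_fn (Suc (Suc k)) (\<lambda>ys. ys ! 1 + f (ys ! 0 # drop 2 ys))"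
    by (intro rec_fn_add rec_fn_proj) simp_all
  from rec_fn_prim_rec[OF rec_fn_zero this]
  have "rec_fn (Suc k) (\<lambda>xs. \<Sum>y<hd xs. f (y # tl xs))"
  proof (rule rec_fn_cong)
    show "prim_rec (\<lambda>xs. 0) (\<lambda>ys. ys ! 1 + f (ys ! 0 # drop 2 ys)) n xs = (\<Sum>y<n. f (y # xs))"
      for n xs by (induction n) auto
  qed
  then show ?thesis using rec_fn_Cons[OF _ g] by fastforce
qed

lemma rec_pred_cong: "rec_pred k P \<Longrightarrow> (\<And>xs. length xs = k \<Longrightarrow> P xs = Q xs) \<Longrightarrow> rec_pred k Q"
  unfolding rec_pred_def by (erule rec_fn_cong) simp

lemma rec_pred_le:
  assumes "rec_fn k f" "rec_fn k g"
  shows "rec_pred k (\<lambda>xs. f xs \<le> g xs)"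
proof -
  have "rec_fn k (\<lambda>xs. 1 - (f xs - g xs))" using assms by (intro rec_fn_diff rec_fn_const)
  then show ?thesis unfolding rec_pred_def by (rule rec_fn_cong) auto
qed

lemma rec_pred_less: "rec_fn k f \<Longrightarrow> rec_fn k g \<Longrightarrow> rec_pred k (\<lambda>xs. f xs < g xs)"
  using rec_pred_le[OF rec_fn_Suc] by (simp add: Suc_le_eq)

lemma rec_pred_not:
  assumes "rec_pred k P"
  shows "rec_pred k (\<lambda>xs. \<not> P xs)"
proof -
  have "rec_fn k (\<lambda>xs. 1 - (if P xs then 1 else 0))"
    using assms unfolding rec_pred_def by (intro rec_fn_diff rec_fn_const)
  then show ?thesis unfolding rec_pred_def by (rule rec_fn_cong) auto
qed

lemma rec_pred_conj:
  assumes "rec_pred k P" "rec_pred k Q"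
  shows "rec_pred k (\<lambda>xs. P xs \<and> Q xs)"
proof -
  have "rec_fn k (\<lambda>xs. (if P xs then 1 else 0) * (if Q xs then 1 else 0))"
    using assms unfolding rec_pred_def by (intro rec_fn_mult)
  then show ?thesis unfolding rec_pred_def by (rule rec_fn_cong) auto
qed

lemma rec_pred_imp: "rec_pred k P \<Longrightarrow> rec_pred k Q \<Longrightarrow> rec_pred k (\<lambda>xs. P xs \<longrightarrow> Q xs)"
  using rec_pred_not[OF rec_pred_conj[OF _ rec_pred_not]] by simp

lemma rec_pred_eq: "rec_fn k f \<Longrightarrow> rec_fn k g \<Longrightarrow> rec_pred k (\<lambda>xs. f xs = g xs)"
  using rec_pred_conj[OF rec_pred_le rec_pred_le] by (simp add: order_eq_iff)

lemma rec_fn_If: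
  assumes "rec_pred k P" "rec_fn k f" "rec_fn k g"
  shows "rec_fn k (\<lambda>xs. if P xs then f xs else g xs)"
proof -
  have "rec_fn k (\<lambda>xs. (if P xs then 1 else 0) * f xs + (1 - (if P xs then 1 else 0)) * g xs)"
    using assms unfolding rec_pred_def by (intro rec_fn_add rec_fn_mult rec_fn_diff rec_fn_const)
  then show ?thesis by (rule rec_fn_cong) auto
qed

lemma sum_indicator_lessThan: "(\<Sum>y<(n::nat). if P y then 1 else 0::nat) = card {y. y < n \<and> P y}"
  using sum.inter_filter[OF finite_lessThan[of n], of "\<lambda>_. 1::nat" P] by simp

lemma rec_pred_bex_lessThan:
  assumes "rec_pred (Suc k) P" "rec_fn k g"
  shows "rec_pred k (\<lambda>xs. \<exists>y<g xs. P (y # xs))"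
proof -
  have "rec_pred k (\<lambda>xs. 1 \<le> (\<Sum>y<g xs. if P (y # xs) then 1 else (0::nat)))"
    using rec_pred_le[OF rec_fn_const rec_fn_sum_lessThan[OF assms(1)[unfolded rec_pred_def] assms(2)]] .
  then show ?thesis
    by (rule rec_pred_cong) (auto simp: sum_indicator_lessThan Suc_le_eq card_gt_0_iff)
qed

lemma rec_pred_ball_lessThan:
  "rec_pred (Suc k) P \<Longrightarrow> rec_fn k g \<Longrightarrow> rec_pred k (\<lambda>xs. \<forall>y<g xs. P (y # xs))"
  using rec_pred_not[OF rec_pred_bex_lessThan[OF rec_pred_not]] by simp

lemma rec_pred_indicator_program:
  assumes "rec_pred k P"
  obtains t where "\<And>xs. length xs = k \<Longrightarrow> evalr t xs (if P xs then 0 else 1)"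
proof -
  have "rec_fn k (\<lambda>xs. if P xs then 0 else 1)"
    using rec_pred_not[OF assms] unfolding rec_pred_def by (rule rec_fn_cong) simp
  then show ?thesis using that unfolding rec_fn_def by blast
qed

lemma rec_fn_Least:
  assumes P: "rec_pred (Suc k) P" and ex: "\<And>xs. length xs = k \<Longrightarrow> \<exists>y. P (y # xs)"
  shows "rec_fn k (\<lambda>xs. LEAST y. P (y # xs))"
proof -
  obtain t where t: "\<And>xs. length xs = Suc k \<Longrightarrow> evalr t xs (if P xs then 0 else 1)"
    using rec_pred_indicator_program[OF P] by blast
  have "evalr (Mn t) xs (LEAST y. P (y # xs))" if "length xs = k" for xs
  proof -
    have "(\<lambda>y. (if P (y # xs) then 0 else 1::nat) = 0) = (\<lambda>y. P (y # xs))" by auto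
    then show ?thesis
      using evalr_Mn_Least[of t xs "\<lambda>y. if P (y # xs) then 0 else 1"] t ex[OF that] that by simp
  qed
  then show ?thesis unfolding rec_fn_def by blast
qed

lemma rec_pred_ex_semidecidable:
  assumes P: "rec_pred (Suc k) P"
  shows "\<exists>t. \<forall>xs. length xs = k \<longrightarrow> ((\<exists>y. P (y # xs)) \<longleftrightarrow> (\<exists>v. evalr t xs v))"
proof -
  obtain t where t: "\<And>xs. length xs = Suc k \<Longrightarrow> evalr t xs (if P xs then 0 else 1)"
    using rec_pred_indicator_program[OF P] by blast
  have "(\<exists>y. P (y # xs)) \<longleftrightarrow> (\<exists>v. evalr (Mn t) xs v)" if "length xs = k" for xs
  proof
    assume "\<exists>y. P (y # xs)"
    then have "\<exists>y. (if P (y # xs) then 0 else 1::nat) = 0" by simp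
    then show "\<exists>v. evalr (Mn t) xs v"
      using evalr_Mn_Least[of t xs "\<lambda>y. if P (y # xs) then 0 else 1"] t that by auto
  next
    assume "\<exists>v. evalr (Mn t) xs v"
    then obtain v where "evalr t (v # xs) 0" by (auto elim: evalr_MnE)
    with evalr_deterministic t[of "v # xs"] that show "\<exists>y. P (y # xs)"
      by (metis length_Cons zero_neq_one)
  qed
  then show ?thesis by blast
qed

lemma div_eq_sum_lessThan:
  assumes q: "(0::nat) < q"
  shows "x div q = (\<Sum>z<x. if Suc z * q \<le> x then 1 else 0)"
proof -
  have "{z. z < x \<and> Suc z * q \<le> x} = {..<x div q}"
  proof (rule set_eqI)
    fix z
    have "Suc z * q \<le> x \<longleftrightarrow> z < x div q"
      using less_eq_div_iff_mult_less_eq[OF q, of "Suc z" x] by (simp add: Suc_le_eq)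
    moreover have "z < x div q \<Longrightarrow> z < x" by (meson div_le_dividend less_le_trans)
    ultimately show "z \<in> {z. z < x \<and> Suc z * q \<le> x} \<longleftrightarrow> z \<in> {..<x div q}" by auto
  qed
  then show ?thesis by (simp add: sum_indicator_lessThan)
qed

lemma rec_fn_div:
  assumes f: "rec_fn k f" and g: "rec_fn k g"
  shows "rec_fn k (\<lambda>xs. f xs div g xs)"
proof -
  have "rec_fn (Suc k) (\<lambda>ys. if Suc (ys ! 0) * g (tl ys) \<le> f (tl ys) then 1 else 0)"
    using rec_pred_le[OF rec_fn_mult[OF rec_fn_Suc[OF rec_fn_proj] rec_fn_tl[OF g]] rec_fn_tl[OF f], of 0]
    by (simp add: rec_pred_def)
  from rec_fn_sum_lessThan[OF this f]
  have "rec_fn k (\<lambda>xs. if g xs = 0 then 0 else (\<Sum>z<f xs. if Suc z * g xs \<le> f xs then 1 else 0))"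
    by (intro rec_fn_If rec_pred_eq g rec_fn_const) simp
  then show ?thesis by (rule rec_fn_cong) (simp add: div_eq_sum_lessThan)
qed

lemma rec_fn_mod:
  assumes "rec_fn k f" "rec_fn k g"
  shows "rec_fn k (\<lambda>xs. f xs mod g xs)"
proof -
  have "rec_fn k (\<lambda>xs. f xs - g xs * (f xs div g xs))"
    using assms by (intro rec_fn_diff rec_fn_mult rec_fn_div)
  then show ?thesis by (rule rec_fn_cong) (simp add: minus_mult_div_eq_mod)
qed

lemma rec_pred_bit:
  assumes "rec_fn k f" "rec_fn k g"
  shows "rec_pred k (\<lambda>xs. bit (f xs) (g xs))"
proof -
  have "rec_pred k (\<lambda>xs. f xs div 2 ^ g xs mod 2 = 1)"
    using assms by (intro rec_pred_eq rec_fn_mod rec_fn_div rec_fn_power2 rec_fn_const)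
  then show ?thesis by (rule rec_pred_cong) (simp add: bit_iff_odd odd_iff_mod_2_eq_one)
qed

lemma total_rec1_iff_rec_fn: "total_rec1 f \<longleftrightarrow> rec_fn 1 (\<lambda>xs. f (xs ! 0))"
proof
  show "total_rec1 f \<Longrightarrow> rec_fn 1 (\<lambda>xs. f (xs ! 0))"
    unfolding rec_fn_def total_rec1_def by (metis length_1_conv_nth)
  show "rec_fn 1 (\<lambda>xs. f (xs ! 0)) \<Longrightarrow> total_rec1 f"
    unfolding rec_fn_def total_rec1_def by (metis length_Cons list.size(3) nth_Cons_0 One_nat_def)
qed

lemma total_rec2_iff_rec_fn: "total_rec2 f \<longleftrightarrow> rec_fn 2 (\<lambda>xs. f (xs ! 0) (xs ! 1))"
proof
  show "total_rec2 f \<Longrightarrow> rec_fn 2 (\<lambda>xs. f (xs ! 0) (xs ! 1))"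
    unfolding rec_fn_def total_rec2_def by (metis length_2_conv_nth)
  show "rec_fn 2 (\<lambda>xs. f (xs ! 0) (xs ! 1)) \<Longrightarrow> total_rec2 f"
    unfolding rec_fn_def total_rec2_def
    by (metis (no_types, lifting) length_Cons list.size(3) nth_Cons_0 nth_Cons_Suc numeral_2_eq_2 One_nat_def)
qed

lemma rec_fn_total_rec1_nth:
  assumes "total_rec1 L" "i < k"
  shows "rec_fn k (\<lambda>xs. L (xs ! i))"
  using rec_fn_comp1[OF assms(1)[unfolded total_rec1_iff_rec_fn] rec_fn_proj[OF assms(2)]] by simp

lemma rec_rel2_iff_rec_pred: "rec_rel2 P \<longleftrightarrow> rec_pred 2 (\<lambda>xs. P (xs ! 0) (xs ! 1))"
  by (simp add: rec_rel2_def rec_pred_def total_rec2_iff_rec_fn)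

section \<open>Prefix codes and the fair-coin measure\<close>

definition prefix_code :: "nat \<Rightarrow> (nat \<Rightarrow> bool) \<Rightarrow> nat" where
  "prefix_code L X = (\<Sum>i<L. if X i then 2 ^ i else 0)"

lemma prefix_code_Suc: "prefix_code (Suc L) X = prefix_code L X + (if X L then 2 ^ L else 0)"
  by (simp add: prefix_code_def)

lemma prefix_code_less: "prefix_code L X < 2 ^ L"
  by (induction L) (auto simp: prefix_code_Suc prefix_code_def[of 0])

lemma prefix_code_eq_iff: "c < 2 ^ L \<Longrightarrow> prefix_code L X = c \<longleftrightarrow> (\<forall>i<L. X i = bit c i)"
proof (induction L arbitrary: c)
  case 0 then show ?case by (simp add: prefix_code_def)
next
  case (Suc L)
  have "c div 2 ^ L < 2" using Suc.prems by (simp add: div_less_iff_less_mult mult.commute)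
  then have "c div 2 ^ L = 0 \<or> c div 2 ^ L = 1" by linarith
  then have "c div 2 ^ L = (if bit c L then 1 else 0)"
    by (auto simp: bit_iff_odd)
  then have c: "c = c mod 2 ^ L + (if bit c L then 2 ^ L else 0)"
    by (metis mult.commute mult_1 mult_0 mod_div_mult_eq add.commute)
  have low_bits: "prefix_code L X = c mod 2 ^ L \<longleftrightarrow> (\<forall>i<L. X i = bit c i)"
    using Suc.IH[of "c mod 2 ^ L"] by (simp add: bit_take_bit_iff flip: take_bit_eq_mod)
  have "prefix_code (Suc L) X = c \<longleftrightarrow> prefix_code L X = c mod 2 ^ L \<and> X L = bit c L"
  proof -
    have split: "a < 2 ^ L \<Longrightarrow> d < 2 ^ L \<Longrightarrow>
        a + (if x then 2 ^ L else 0) = d + (if b then 2 ^ L else 0) \<longleftrightarrow> a = d \<and> x = b"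
      for a d :: nat and x b by auto
    have "prefix_code L X < 2 ^ L" "c mod 2 ^ L < 2 ^ L" by (simp_all add: prefix_code_less)
    from split[OF this, of "X L" "bit c L"] c show ?thesis
      by (simp add: prefix_code_Suc)
  qed
  then show ?case using low_bits by (auto simp: less_Suc_eq)
qed

lemma bit_prefix_code: "i < L \<Longrightarrow> bit (prefix_code L X) i = X i"
  using prefix_code_eq_iff[OF prefix_code_less[of L X], of X] by simp

lemma prefix_code_mod: "L \<le> M \<Longrightarrow> prefix_code L X = prefix_code M X mod 2 ^ L"
proof (induction M)
  case 0 then show ?case by (simp add: prefix_code_def)
next
  case (Suc M)
  show ?case
  proof (cases "L = Suc M")
    case True then show ?thesis using prefix_code_less[of "Suc M" X] by simp
  next
    case False
    then have "L \<le> M" using Suc by simp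
    then have "2 ^ L dvd (2::nat) ^ M" by (simp add: le_imp_power_dvd)
    then have "(prefix_code M X + (if X M then 2 ^ M else 0)) mod 2 ^ L = prefix_code M X mod 2 ^ L"
      by (auto simp: mod_add_right_eq[symmetric])
    then show ?thesis using Suc.IH[OF \<open>L \<le> M\<close>] by (simp add: prefix_code_Suc)
  qed
qed

lemma prefix_code_less_power_if_zero_from: "(\<And>i. j \<le> i \<Longrightarrow> \<not> X i) \<Longrightarrow> prefix_code L X < 2 ^ j"
proof (induction L)
  case 0 then show ?case by (simp add: prefix_code_def)
next
  case (Suc L)
  show ?case
  proof (cases "L < j")
    case True
    have "prefix_code (Suc L) X < 2 ^ Suc L" by (rule prefix_code_less)
    also have "(2::nat) ^ Suc L \<le> 2 ^ j" using True by (intro power_increasing) auto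
    finally show ?thesis .
  next
    case False
    then show ?thesis using Suc by (simp add: prefix_code_Suc)
  qed
qed

lemma
  assumes "finite F"
  shows sets_coin_fixed_bits: "{X. \<forall>i\<in>F. X i = v i} \<in> sets coin"
    and measure_coin_fixed_bits: "measure coin {X. \<forall>i\<in>F. X i = v i} = (1/2) ^ card F"
proof -
  let ?B = "\<lambda>_::nat. measure_pmf (bernoulli_pmf (1/2))"
  have eq: "{X. \<forall>i\<in>F. X i = v i} = prod_emb UNIV ?B F (\<Pi>\<^sub>E i\<in>F. {v i})"
    by (auto simp: prod_emb_iff PiE_iff)
  show "{X. \<forall>i\<in>F. X i = v i} \<in> sets coin"
    unfolding coin_def eq using assms by (intro sets_PiM_I) auto
  have "emeasure coin {X. \<forall>i\<in>F. X i = v i} = (\<Prod>i\<in>F. emeasure (?B i) {v i})"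
    unfolding coin_def eq
    by (rule emeasure_PiM_emb) (auto simp: measure_pmf.prob_space_axioms assms)
  also have "\<dots> = (\<Prod>i\<in>F. ennreal (1/2))"
    by (intro prod.cong refl) (auto simp: emeasure_pmf_single)
  also have "\<dots> = ennreal (\<Prod>i\<in>F. 1/2)"
    by (rule prod_ennreal) auto
  also have "\<dots> = ennreal ((1/2) ^ card F)"
    by simp
  finally show "measure coin {X. \<forall>i\<in>F. X i = v i} = (1/2) ^ card F"
    by (simp add: measure_def)
qed

lemma prob_space_coin: "prob_space coin"
  unfolding coin_def by (rule prob_space_PiM) (simp add: measure_pmf.prob_space_axioms)

lemma prefix_code_eq_fixed_bits:
  "c < 2 ^ L \<Longrightarrow> {X. prefix_code L X = c} = {X. \<forall>i\<in>{..<L}. X i = bit c i}"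
  by (auto simp: prefix_code_eq_iff)

lemma sets_coin_prefix_code_eq: "{X. prefix_code L X = c} \<in> sets coin"
proof (cases "c < 2 ^ L")
  case True then show ?thesis
    by (simp add: prefix_code_eq_fixed_bits sets_coin_fixed_bits)
next
  case False
  then have "{X. prefix_code L X = c} = {}" using prefix_code_less[of L] by (auto simp: not_less) (metis leD)
  then show ?thesis by simp
qed

lemma prefix_code_in_eq_UN: "{X. prefix_code L X \<in> V} = (\<Union>c\<in>V \<inter> {..<2 ^ L}. {X. prefix_code L X = c})"
  using prefix_code_less by auto

lemma sets_coin_prefix_code_in: "{X. prefix_code L X \<in> V} \<in> sets coin"
  unfolding prefix_code_in_eq_UN
  by (intro sets.finite_UN) (auto intro: sets_coin_prefix_code_eq)

lemma measure_coin_prefix_code_in: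
  "measure coin {X. prefix_code L X \<in> V} = card (V \<inter> {..<2 ^ L}) / 2 ^ L"
proof -
  interpret prob_space coin by (rule prob_space_coin)
  have "measure coin {X. prefix_code L X \<in> V}
      = (\<Sum>c\<in>V \<inter> {..<2 ^ L}. measure coin {X. prefix_code L X = c})"
    unfolding prefix_code_in_eq_UN
    by (rule measure_finite_Union)
       (auto simp: disjoint_family_on_def intro: sets_coin_prefix_code_eq)
  also have "\<dots> = (\<Sum>c\<in>V \<inter> {..<2 ^ L}. (1/2) ^ L)"
    by (intro sum.cong refl) (auto simp: prefix_code_eq_fixed_bits measure_coin_fixed_bits)
  finally show ?thesis by (simp add: power_divide)
qed

declare bl_of_nat.simps[simp del]

fun string_code :: "nat \<Rightarrow> nat \<Rightarrow> nat" where
  "string_code 0 c = 0"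
| "string_code (Suc L) c = 2 * string_code L c + 1 + (if bit c L then 1 else 0)"

lemma bl_of_nat_string_code: "bl_of_nat (string_code L c) = map (bit c) [0..<L]"
proof (induction L)
  case 0 then show ?case by (simp add: bl_of_nat.simps)
next
  case (Suc L)
  have "bl_of_nat (string_code (Suc L) c)
      = bl_of_nat ((string_code (Suc L) c - 1) div 2) @ [(string_code (Suc L) c - 1) mod 2 = 1]"
    by (subst bl_of_nat.simps) simp
  also have "\<dots> = bl_of_nat (string_code L c) @ [bit c L]"
    by (cases "bit c L") simp_all
  finally show ?case using Suc.IH by simp
qed

lemma cyl_string_code: "c < 2 ^ L \<Longrightarrow> cyl (bl_of_nat (string_code L c)) = {X. prefix_code L X = c}"
  unfolding bl_of_nat_string_code cyl_def by (auto simp: prefix_code_eq_iff)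

lemma rec_fn_string_code: "rec_fn 2 (\<lambda>xs. string_code (xs ! 0) (xs ! 1))"
proof -
  let ?h = "\<lambda>ys. 2 * ys ! 1 + 1 + (if bit (ys ! 2) (ys ! 0) then 1 else 0)"
  have "rec_fn 3 ?h"
    using rec_pred_bit[OF rec_fn_proj[of 2 3] rec_fn_proj[of 0 3]]
    by (intro rec_fn_add rec_fn_mult rec_fn_const rec_fn_proj) (auto simp: rec_pred_def)
  then have "rec_fn 2 (\<lambda>xs. prim_rec (\<lambda>xs. 0) ?h (hd xs) (tl xs))"
    using rec_fn_prim_rec[of 1 "\<lambda>xs. 0" ?h] by (simp add: rec_fn_zero numeral_2_eq_2 numeral_3_eq_3)
  moreover have "prim_rec (\<lambda>xs. 0) ?h L [c] = string_code L c" for L c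
    by (induction L) auto
  ultimately show ?thesis by (elim rec_fn_cong2) simp
qed

lemma (in finite_measure) measure_UN_le_of_partial_sums:
  fixes A :: "nat \<Rightarrow> 'a set"
  assumes "range A \<subseteq> sets M" "\<And>N. (\<Sum>i<N. measure M (A i)) \<le> R"
  shows "measure M (\<Union>i. A i) \<le> R"
proof -
  have "summable (\<lambda>i. measure M (A i))"
    using assms(2) by (intro summableI_nonneg_bounded) auto
  then have "measure M (\<Union>i. A i) \<le> (\<Sum>i. measure M (A i))"
    by (rule finite_measure_subadditive_countably[OF assms(1)])
  also have "\<dots> \<le> R"
    by (rule suminf_le_const) (use \<open>summable _\<close> assms(2) in auto)
  finally show ?thesis .
qed

lemma sum_power_half_le: "(\<Sum>i<N. (1/2::real) ^ Suc (n + i)) \<le> (1/2) ^ n"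
proof -
  have "(\<Sum>i<N. (1/2::real) ^ Suc (n + i)) = (1/2) ^ n * (1 - (1/2) ^ N)"
    by (induction N) (auto simp: power_add field_simps)
  also have "\<dots> \<le> (1/2) ^ n" by (simp add: mult_left_le)
  finally show ?thesis .
qed

section \<open>Schnorr tests from decidable prefix events\<close>

definition prefix_event :: "(nat \<Rightarrow> nat) \<Rightarrow> (nat \<Rightarrow> nat \<Rightarrow> bool) \<Rightarrow> nat \<Rightarrow> (nat \<Rightarrow> bool) set" where
  "prefix_event L Q e = {X. Q e (prefix_code (L e) X)}"

definition prefix_test :: "(nat \<Rightarrow> nat) \<Rightarrow> (nat \<Rightarrow> nat \<Rightarrow> bool) \<Rightarrow> (nat \<times> nat) set" where
  "prefix_test L Q = {(n, string_code (L e) c) | n e c. n \<le> e \<and> c < 2 ^ L e \<and> Q e c}"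

lemma sets_coin_prefix_event: "prefix_event L Q e \<in> sets coin"
  using sets_coin_prefix_code_in[of "L e" "{c. Q e c}"] by (simp add: prefix_event_def)

lemma mem_prefix_test_iff:
  "(n, m) \<in> prefix_test L Q \<longleftrightarrow> (\<exists>e c. n \<le> e \<and> c < 2 ^ L e \<and> Q e c \<and> m = string_code (L e) c)"
  unfolding prefix_test_def by blast

lemma test_set_prefix_test: "test_set (prefix_test L Q) n = (\<Union>i. prefix_event L Q (n + i))"
proof (intro equalityI subsetI)
  fix X assume "X \<in> test_set (prefix_test L Q) n"
  then obtain m where "(n, m) \<in> prefix_test L Q" "X \<in> cyl (bl_of_nat m)"
    unfolding test_set_def by blast
  then obtain e c where "n \<le> e" "c < 2 ^ L e" "Q e c" "X \<in> cyl (bl_of_nat (string_code (L e) c))"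
    unfolding mem_prefix_test_iff by blast
  then have "X \<in> prefix_event L Q (n + (e - n))"
    by (simp add: cyl_string_code prefix_event_def)
  then show "X \<in> (\<Union>i. prefix_event L Q (n + i))" by blast
next
  fix X assume "X \<in> (\<Union>i. prefix_event L Q (n + i))"
  then obtain i where i: "Q (n + i) (prefix_code (L (n + i)) X)"
    by (auto simp: prefix_event_def)
  let ?c = "prefix_code (L (n + i)) X"
  have c: "?c < 2 ^ L (n + i)" by (rule prefix_code_less)
  with i have "(n, string_code (L (n + i)) ?c) \<in> prefix_test L Q"
    unfolding mem_prefix_test_iff by (intro exI[of _ "n + i"] exI[of _ ?c]) simp
  moreover have "X \<in> cyl (bl_of_nat (string_code (L (n + i)) ?c))"
    by (simp add: cyl_string_code[OF c])
  ultimately show "X \<in> test_set (prefix_test L Q) n" unfolding test_set_def by blast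
qed

lemma measure_test_set_prefix_test_le:
  assumes small: "\<And>e. measure coin (prefix_event L Q e) \<le> (1/2) ^ Suc e"
  shows "measure coin (test_set (prefix_test L Q) n) \<le> (1/2) ^ n"
proof -
  interpret prob_space coin by (rule prob_space_coin)
  have "(\<Sum>i<N. measure coin (prefix_event L Q (n + i))) \<le> (\<Sum>i<N. (1/2) ^ Suc (n + i))" for N
    by (intro sum_mono small)
  then have "(\<Sum>i<N. measure coin (prefix_event L Q (n + i))) \<le> (1/2) ^ n" for N
    using sum_power_half_le order_trans by blast
  then show ?thesis
    unfolding test_set_prefix_test
    by (intro measure_UN_le_of_partial_sums) (auto intro: sets_coin_prefix_event)
qed

text \<open>The sum is just a computable bound on the \<open>L (n + e)\<close> for \<open>e < k\<close>.\<close>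

definition prefix_test_length :: "(nat \<Rightarrow> nat) \<Rightarrow> nat \<Rightarrow> nat \<Rightarrow> nat" where
  "prefix_test_length L n k = (\<Sum>e<k. L (n + e))"

definition prefix_test_count :: "(nat \<Rightarrow> nat) \<Rightarrow> (nat \<Rightarrow> nat \<Rightarrow> bool) \<Rightarrow> nat \<Rightarrow> nat \<Rightarrow> nat" where
  "prefix_test_count L Q n k =
     card {c. c < 2 ^ prefix_test_length L n k \<and> (\<exists>e<k. Q (n + e) (c mod 2 ^ L (n + e)))}"

lemma measure_prefix_events_lessThan:
  "measure coin (\<Union>e<k. prefix_event L Q (n + e)) = prefix_test_count L Q n k / 2 ^ prefix_test_length L n k"
proof -
  let ?M = "prefix_test_length L n k"
  let ?V = "{c. \<exists>e<k. Q (n + e) (c mod 2 ^ L (n + e))}"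
  have LM: "L (n + e) \<le> ?M" if "e < k" for e
    unfolding prefix_test_length_def using that by (intro member_le_sum) auto
  have "X \<in> (\<Union>e<k. prefix_event L Q (n + e)) \<longleftrightarrow> X \<in> {X. prefix_code ?M X \<in> ?V}" for X
    using prefix_code_mod[OF LM] by (auto simp: prefix_event_def)
  then have "(\<Union>e<k. prefix_event L Q (n + e)) = {X. prefix_code ?M X \<in> ?V}"
    by (rule set_eqI)
  then have "measure coin (\<Union>e<k. prefix_event L Q (n + e)) = measure coin {X. prefix_code ?M X \<in> ?V}"
    by (rule arg_cong)
  also have "\<dots> = card (?V \<inter> {..<2 ^ ?M}) / 2 ^ ?M"
    by (rule measure_coin_prefix_code_in)
  also have "?V \<inter> {..<2 ^ ?M} = {c. c < 2 ^ ?M \<and> (\<exists>e<k. Q (n + e) (c mod 2 ^ L (n + e)))}"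
    by auto
  finally show ?thesis
    unfolding prefix_test_count_def .
qed

lemma measure_test_set_prefix_test_approx:
  assumes small: "\<And>e. measure coin (prefix_event L Q e) \<le> (1/2) ^ Suc e"
  shows "\<bar>measure coin (test_set (prefix_test L Q) n)
           - prefix_test_count L Q n k / 2 ^ prefix_test_length L n k\<bar> \<le> (1/2) ^ k"
proof -
  interpret prob_space coin by (rule prob_space_coin)
  define F where "F = (\<Union>e<k. prefix_event L Q (n + e))"
  let ?T = "\<lambda>n. test_set (prefix_test L Q) n"
  have sets: "F \<in> sets coin" "?T m \<in> sets coin" for m
    unfolding F_def test_set_prefix_test by (auto intro: sets_coin_prefix_event)
  have "?T n \<subseteq> F \<union> ?T (n + k)"
  proof
    fix X assume "X \<in> ?T n"
    then obtain i where X: "X \<in> prefix_event L Q (n + i)" unfolding test_set_prefix_test by blast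
    show "X \<in> F \<union> ?T (n + k)"
    proof (cases "i < k")
      case True then show ?thesis using X unfolding F_def by auto
    next
      case False
      then have "n + i = (n + k) + (i - k)" by simp
      then have "X \<in> prefix_event L Q ((n + k) + (i - k))" using X by simp
      then show ?thesis unfolding test_set_prefix_test by blast
    qed
  qed
  then have "measure coin (?T n) \<le> measure coin (F \<union> ?T (n + k))"
    using sets by (intro finite_measure_mono) auto
  also have "\<dots> \<le> measure coin F + measure coin (?T (n + k))"
    using sets by (rule measure_Un_le)
  also have "\<dots> \<le> measure coin F + (1/2) ^ (n + k)"
    using measure_test_set_prefix_test_le[OF small] by simp
  also have "\<dots> \<le> measure coin F + (1/2) ^ k"
    by (simp add: power_decreasing)
  finally have "measure coin (?T n) \<le> measure coin F + (1/2) ^ k" .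
  moreover have "measure coin F \<le> measure coin (?T n)"
    using sets unfolding F_def test_set_prefix_test by (intro finite_measure_mono) auto
  ultimately show ?thesis
    using measure_prefix_events_lessThan[of L Q n k] by (simp add: F_def)
qed

text \<open>A single bound on both witnesses reduces membership to one unbounded search.\<close>

lemma mem_prefix_test_iff_bounded:
  "(n, m) \<in> prefix_test L Q \<longleftrightarrow>
    (\<exists>p. \<exists>e<Suc p. \<exists>c<Suc p. n \<le> e \<and> c < 2 ^ L e \<and> Q e c \<and> m = string_code (L e) c)"
proof
  assume "(n, m) \<in> prefix_test L Q"
  then obtain e c where "n \<le> e" "c < 2 ^ L e" "Q e c" "m = string_code (L e) c"
    unfolding mem_prefix_test_iff by blast
  moreover have "e < Suc (e + c)" "c < Suc (e + c)" by simp_all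
  ultimately show "\<exists>p. \<exists>e<Suc p. \<exists>c<Suc p. n \<le> e \<and> c < 2 ^ L e \<and> Q e c \<and> m = string_code (L e) c"
    by blast
qed (auto simp: mem_prefix_test_iff)

lemma ce_set2_prefix_test:
  assumes L: "total_rec1 L" and Q: "rec_rel2 Q"
  shows "ce_set2 (prefix_test L Q)"
proof -
  have Q5: "rec_pred (Suc 4) (\<lambda>zs. Q (zs ! 1) (zs ! 0))"
    using rec_fn_comp2[OF Q[unfolded rec_rel2_iff_rec_pred rec_pred_def]
        rec_fn_proj[of 1 "Suc 4"] rec_fn_proj[of 0 "Suc 4"]]
    by (simp add: rec_pred_def)
  have "rec_fn (Suc 4) (\<lambda>zs. string_code (L (zs ! 1)) (zs ! 0))"
    using rec_fn_comp2[OF rec_fn_string_code rec_fn_total_rec1_nth[OF L] rec_fn_proj[of 0 "Suc 4"]] by simp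
  then have "rec_pred (Suc 4) (\<lambda>zs. zs ! 3 \<le> zs ! 1 \<and> zs ! 0 < 2 ^ L (zs ! 1) \<and> Q (zs ! 1) (zs ! 0)
      \<and> zs ! 4 = string_code (L (zs ! 1)) (zs ! 0))"
    by (intro rec_pred_conj rec_pred_le rec_pred_less rec_pred_eq rec_fn_proj rec_fn_power2
        rec_fn_total_rec1_nth[OF L] Q5) auto
  from rec_pred_bex_lessThan[OF this rec_fn_Suc[OF rec_fn_proj[of 1 4]]]
  have "rec_pred (Suc 3) (\<lambda>ys. \<exists>c<Suc (ys ! 1). ys ! 2 \<le> ys ! 0 \<and> c < 2 ^ L (ys ! 0) \<and> Q (ys ! 0) c
      \<and> ys ! 3 = string_code (L (ys ! 0)) c)"
    by simp
  from rec_pred_bex_lessThan[OF this rec_fn_Suc[OF rec_fn_proj[of 0 3]]]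
  have "rec_pred (Suc 2) (\<lambda>xs. \<exists>e<Suc (xs ! 0). \<exists>c<Suc (xs ! 0). xs ! 1 \<le> e \<and> c < 2 ^ L e \<and> Q e c
      \<and> xs ! 2 = string_code (L e) c)"
    by simp
  from rec_pred_ex_semidecidable[OF this] obtain t where t: "\<forall>xs. length xs = 2 \<longrightarrow>
      ((\<exists>p. \<exists>e<Suc p. \<exists>c<Suc p. xs ! 0 \<le> e \<and> c < 2 ^ L e \<and> Q e c \<and> xs ! 1 = string_code (L e) c)
        \<longleftrightarrow> (\<exists>v. evalr t xs v))"
    by auto
  then show ?thesis
    unfolding ce_set2_def mem_prefix_test_iff_bounded using t[rule_format, of "[_, _]"]
    by (intro exI[of _ t]) simp
qed

lemma total_rec2_prefix_test_length:
  assumes L: "total_rec1 L"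
  shows "total_rec2 (prefix_test_length L)"
proof -
  have "rec_fn (Suc 2) (\<lambda>ys. L (ys ! 1 + ys ! 0))"
    using rec_fn_comp1[OF L[unfolded total_rec1_iff_rec_fn] rec_fn_add[OF rec_fn_proj rec_fn_proj]]
    by simp
  from rec_fn_sum_lessThan[OF this rec_fn_proj[of 1 2]]
  have "rec_fn 2 (\<lambda>xs. \<Sum>e<xs ! 1. L (xs ! 0 + e))" by simp
  then show ?thesis
    unfolding total_rec2_iff_rec_fn prefix_test_length_def by (rule rec_fn_cong) simp
qed

lemma total_rec2_prefix_test_count:
  assumes L: "total_rec1 L" and Q: "rec_rel2 Q"
  shows "total_rec2 (prefix_test_count L Q)"
proof -
  have "rec_fn (Suc 3) (\<lambda>zs. L (zs ! 2 + zs ! 0))"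
    using rec_fn_comp1[OF L[unfolded total_rec1_iff_rec_fn] rec_fn_add[OF rec_fn_proj rec_fn_proj]]
    by simp
  then have "rec_pred (Suc 3) (\<lambda>zs. Q (zs ! 2 + zs ! 0) (zs ! 1 mod 2 ^ L (zs ! 2 + zs ! 0)))"
    using rec_fn_comp2[OF Q[unfolded rec_rel2_iff_rec_pred rec_pred_def]
        rec_fn_add[OF rec_fn_proj rec_fn_proj] rec_fn_mod[OF rec_fn_proj rec_fn_power2]]
    by (simp add: rec_pred_def)
  from rec_pred_bex_lessThan[OF this rec_fn_proj[of 2 3]]
  have "rec_pred (Suc 2) (\<lambda>ys. \<exists>e<ys ! 2. Q (ys ! 1 + e) (ys ! 0 mod 2 ^ L (ys ! 1 + e)))"
    by simp
  from rec_fn_sum_lessThan[OF this[unfolded rec_pred_def]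
      rec_fn_power2[OF total_rec2_prefix_test_length[OF L, unfolded total_rec2_iff_rec_fn]]]
  have "rec_fn 2 (\<lambda>xs. \<Sum>c<2 ^ prefix_test_length L (xs ! 0) (xs ! 1).
      if \<exists>e<xs ! 1. Q (xs ! 0 + e) (c mod 2 ^ L (xs ! 0 + e)) then 1 else 0)"
    by simp
  then show ?thesis
    unfolding total_rec2_iff_rec_fn prefix_test_count_def
    by (rule rec_fn_cong) (simp add: sum_indicator_lessThan)
qed

lemma schnorr_test_prefix_test:
  assumes "total_rec1 L" "rec_rel2 Q"
    and small: "\<And>e. measure coin (prefix_event L Q e) \<le> (1/2) ^ Suc e"
  shows "schnorr_test (prefix_test L Q) (prefix_test_count L Q) (\<lambda>n k. 2 ^ prefix_test_length L n k - 1)"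
proof -
  have "total_rec2 (\<lambda>n k. 2 ^ prefix_test_length L n k - 1)"
    using total_rec2_prefix_test_length[OF assms(1)]
    unfolding total_rec2_iff_rec_fn by (intro rec_fn_diff rec_fn_power2 rec_fn_const)
  then show ?thesis
    unfolding schnorr_test_def
    using assms ce_set2_prefix_test total_rec2_prefix_test_count
      measure_test_set_prefix_test_le[OF small] measure_test_set_prefix_test_approx[OF small]
    by simp
qed

lemma schnorr_random_finite_prefix_events:
  assumes "schnorr_random A" "total_rec1 L" "rec_rel2 Q"
    and "\<And>e. measure coin (prefix_event L Q e) \<le> (1/2) ^ Suc e"
  shows "finite {e. (\<lambda>i. i \<in> A) \<in> prefix_event L Q e}"
proof (rule ccontr)
  assume "infinite {e. (\<lambda>i. i \<in> A) \<in> prefix_event L Q e}"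
  moreover obtain n where "(\<lambda>i. i \<in> A) \<notin> test_set (prefix_test L Q) n"
    using assms schnorr_test_prefix_test unfolding schnorr_random_def by blast
  ultimately obtain e where "n \<le> e" "(\<lambda>i. i \<in> A) \<in> prefix_event L Q (n + (e - n))"
    unfolding infinite_nat_iff_unbounded_le test_set_prefix_test by auto
  then show False using \<open>_ \<notin> test_set _ n\<close> unfolding test_set_prefix_test by blast
qed

lemma schnorr_random_infinite:
  assumes "schnorr_random A"
  shows "infinite A"
proof
  assume "finite A"
  then obtain N where N: "A \<subseteq> {..<N}" using finite_nat_bounded by blast
  let ?L = "\<lambda>e. Suc (2 * e)" and ?Q = "\<lambda>e c. c < 2 ^ e"
  have "total_rec1 ?L"
    unfolding total_rec1_iff_rec_fn by (intro rec_fn_Suc rec_fn_mult rec_fn_const rec_fn_proj) simp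
  moreover have "rec_rel2 ?Q"
    unfolding rec_rel2_iff_rec_pred by (intro rec_pred_less rec_fn_power2 rec_fn_proj) auto
  moreover have "measure coin (prefix_event ?L ?Q e) \<le> (1/2) ^ Suc e" for e
  proof -
    have "{..<(2::nat) ^ e} \<inter> {..<2 ^ ?L e} = {..<2 ^ e}"
      using power_increasing[of e "?L e" "2::nat"] by auto
    then have "measure coin (prefix_event ?L ?Q e) = 2 ^ e / 2 ^ (e + Suc e)"
      using measure_coin_prefix_code_in[of "?L e" "{..<2 ^ e}"] by (simp add: prefix_event_def)
    then show ?thesis by (simp add: power_add power_one_over)
  qed
  ultimately have "finite {e. (\<lambda>i. i \<in> A) \<in> prefix_event ?L ?Q e}"
    using schnorr_random_finite_prefix_events[OF assms] by blast
  moreover have "{N..} \<subseteq> {e. (\<lambda>i. i \<in> A) \<in> prefix_event ?L ?Q e}"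
    using N by (auto simp: prefix_event_def intro!: prefix_code_less_power_if_zero_from)
  ultimately show False using infinite_Ici finite_subset by blast
qed

lemma canonical_numbering_bound:
  assumes D: "canonical_numbering D"
  obtains L where "total_rec1 L" "\<And>e. D e \<subseteq> {..<L e}"
proof -
  have fin: "finite (D e)" for e using D unfolding canonical_numbering_def by auto
  have bound_iff: "card {x. x < l \<and> x \<in> D e} = card (D e) \<longleftrightarrow> D e \<subseteq> {..<l}" for l e
  proof
    assume "card {x. x < l \<and> x \<in> D e} = card (D e)"
    then have "{x. x < l \<and> x \<in> D e} = D e" by (intro card_subset_eq fin) auto
    then show "D e \<subseteq> {..<l}" by auto
  next
    assume "D e \<subseteq> {..<l}"
    then have "{x. x < l \<and> x \<in> D e} = D e" by auto
    then show "card {x. x < l \<and> x \<in> D e} = card (D e)" by simp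
  qed
  have bounded: "\<exists>l. card {x. x < l \<and> x \<in> D e} = card (D e)" for e
    using finite_nat_bounded[OF fin] bound_iff by blast
  define L where "L e = (LEAST l. card {x. x < l \<and> x \<in> D e} = card (D e))" for e
  have "rec_pred 2 (\<lambda>xs. xs ! 1 \<in> D (xs ! 0))"
    using D by (simp add: canonical_numbering_def rec_rel2_iff_rec_pred)
  from rec_fn_comp2[OF this[unfolded rec_pred_def] rec_fn_proj[of 2 "Suc 2"] rec_fn_proj[of 0 "Suc 2"]]
  have "rec_pred (Suc 2) (\<lambda>zs. zs ! 0 \<in> D (zs ! 2))"
    by (simp add: rec_pred_def)
  from rec_fn_sum_lessThan[OF this[unfolded rec_pred_def] rec_fn_proj[of 0 2]]
  have "rec_fn 2 (\<lambda>ys. \<Sum>x<ys ! 0. if x \<in> D (ys ! 1) then 1 else 0)" by simp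
  moreover have "rec_fn 2 (\<lambda>ys. card (D (ys ! 1)))"
    using D rec_fn_total_rec1_nth[of "\<lambda>e. card (D e)" 1 2] by (simp add: canonical_numbering_def)
  ultimately have "rec_pred 2 (\<lambda>ys. (\<Sum>x<ys ! 0. if x \<in> D (ys ! 1) then 1 else 0) = card (D (ys ! 1)))"
    by (rule rec_pred_eq)
  then have "rec_pred 2 (\<lambda>ys. card {x. x < ys ! 0 \<and> x \<in> D (ys ! 1)} = card (D (ys ! 1)))"
    by (rule rec_pred_cong) (simp add: sum_indicator_lessThan)
  from rec_fn_Least[OF this[unfolded numeral_2_eq_2]] have "rec_fn 1 (\<lambda>xs. L (xs ! 0))"
    using bounded by (simp add: L_def)
  moreover have "D e \<subseteq> {..<L e}" for e
    using LeastI_ex[OF bounded] bound_iff unfolding L_def by blast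
  ultimately show ?thesis using that by (simp add: total_rec1_iff_rec_fn)
qed

definition large_subset_code :: "(nat \<Rightarrow> nat set) \<Rightarrow> (nat \<Rightarrow> nat) \<Rightarrow> nat \<Rightarrow> nat \<Rightarrow> bool" where
  "large_subset_code D L e c \<longleftrightarrow> e < card (D e) \<and> (\<forall>x<L e. x \<in> D e \<longrightarrow> bit c x)"

lemma rec_rel2_large_subset_code:
  assumes D: "canonical_numbering D" and L: "total_rec1 L"
  shows "rec_rel2 (large_subset_code D L)"
proof -
  have "rec_pred 2 (\<lambda>xs. xs ! 1 \<in> D (xs ! 0))"
    using D by (simp add: canonical_numbering_def rec_rel2_iff_rec_pred)
  from rec_fn_comp2[OF this[unfolded rec_pred_def] rec_fn_proj[of 1 "Suc 2"] rec_fn_proj[of 0 "Suc 2"]]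
  have "rec_pred (Suc 2) (\<lambda>zs. zs ! 0 \<in> D (zs ! 1))"
    by (simp add: rec_pred_def)
  moreover have "rec_pred (Suc 2) (\<lambda>zs. bit (zs ! 2) (zs ! 0))"
    by (intro rec_pred_bit rec_fn_proj) auto
  moreover have "rec_fn 2 (\<lambda>xs. card (D (xs ! 0)))"
    using D rec_fn_total_rec1_nth[of "\<lambda>e. card (D e)" 0 2] by (simp add: canonical_numbering_def)
  ultimately have "rec_pred 2 (\<lambda>xs. xs ! 0 < card (D (xs ! 0))
      \<and> (\<forall>y<L (xs ! 0). (\<lambda>zs. zs ! 0 \<in> D (zs ! 1) \<longrightarrow> bit (zs ! 2) (zs ! 0)) (y # xs)))"
    by (intro rec_pred_conj rec_pred_less rec_fn_proj rec_pred_ball_lessThan rec_pred_imp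
        rec_fn_total_rec1_nth[OF L]) auto
  then show ?thesis
    unfolding rec_rel2_iff_rec_pred by (rule rec_pred_cong) (simp add: large_subset_code_def)
qed

lemma prefix_event_large_subset_code:
  assumes "\<And>e. D e \<subseteq> {..<L e}"
  shows "prefix_event L (large_subset_code D L) e = {X. e < card (D e) \<and> (\<forall>x\<in>D e. X x)}"
  using assms by (auto simp: prefix_event_def large_subset_code_def bit_prefix_code)

lemma measure_coin_large_subset:
  assumes "finite F"
  shows "measure coin {X. e < card F \<and> (\<forall>x\<in>F. X x)} \<le> (1/2) ^ Suc e"
proof (cases "e < card F")
  case True
  then have "measure coin {X. e < card F \<and> (\<forall>x\<in>F. X x)} = (1/2) ^ card F"
    using measure_coin_fixed_bits[OF assms, of "\<lambda>_. True"] by simp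
  also have "\<dots> \<le> (1/2) ^ Suc e" using True by (intro power_decreasing) auto
  finally show ?thesis .
qed simp

theorem mainTheorem11:
  fixes A :: "nat set"
  assumes "schnorr_random A"
  shows "canonically_immune A"
  unfolding canonically_immune_def
proof (intro conjI exI[of _ "\<lambda>e. e"] allI impI)
  show "infinite A" using assms by (rule schnorr_random_infinite)
  show "total_rec1 (\<lambda>e. e)" by (simp add: total_rec1_iff_rec_fn rec_fn_proj)
  fix D assume D: "canonical_numbering D"
  obtain L where L: "total_rec1 L" "\<And>e. D e \<subseteq> {..<L e}"
    using canonical_numbering_bound[OF D] by metis
  have "finite (D e)" for e using D by (auto simp: canonical_numbering_def)
  then have "measure coin (prefix_event L (large_subset_code D L) e) \<le> (1/2) ^ Suc e" for e
    unfolding prefix_event_large_subset_code[OF L(2)] by (rule measure_coin_large_subset)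
  then have "finite {e. (\<lambda>i. i \<in> A) \<in> prefix_event L (large_subset_code D L) e}"
    by (rule schnorr_random_finite_prefix_events[OF assms L(1) rec_rel2_large_subset_code[OF D L(1)]])
  then show "finite {e. D e \<subseteq> A \<and> e < card (D e)}"
    by (simp add: prefix_event_large_subset_code[OF L(2)] subset_eq conj_commute)
qed

end
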